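(* Let two vehicles $i$ and $j$ move in the plane according to dynamics $(\dot{\boldsymbol\xi},\dot{\boldsymbol\zeta})^{\mathsf T}=F(t,\boldsymbol\xi,\boldsymbol\zeta)$ with bounded velocity and acceleration, as described in the context. Fix a time $t_\circ$ and assume that, for $t\ge t_\circ$, the trajectory $t\mapsto \mathbf p_k(t)$ of each vehicle $k\in\{i,j\}$ is given either by the straight-line model or by the circular model described in the context. Let $d_{ij}(t)=\|\mathbf p_i(t)-\mathbf p_j(t)\|_2$, let $\phi>0$, and let $$\mathcal T_S=\inf\{t\ge t_\circ:\ d_{ij}(t)-\phi\le 0\}.$$ If $\mathcal T_S<\infty$, then there exists $\check t$ with $t_\circ\le \check t<\mathcal T_S$ such that $t\mapsto d_{ij}(t)-\phi$ is strictly decreasing on $[\check t,\mathcal T_S)$.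
   Context: Each vehicle has position $\boldsymbol\xi(t)\in\mathbb R^2$ and velocity $\boldsymbol\zeta(t)\in\mathbb R^2$ obeying $(\dot{\boldsymbol\xi},\dot{\boldsymbol\zeta})^{\mathsf T}=F(t,\boldsymbol\xi,\boldsymbol\zeta)$ with $F:\mathbb R_+\times\mathbb R^2\times\mathbb R^2\to\mathbb R^4$ smooth enough that the solution exists uniquely up to the collision time $\mathcal T$, and with $\boldsymbol\zeta\in C^1([0,\mathcal T);B(0,v_{\max}))$, $\dot{\boldsymbol\zeta}\in C([0,\mathcal T);B(0,a_{\max}))$ (bounded velocity and acceleration; $B(x,r)$ is the open Euclidean ball). Vehicles are modeled as disks of common diameter $\phi$, so a collision means $d_{ij}\le\phi$. At time $t_\circ$ set $(\mathbf p_\circ,\mathbf v_\circ,\mathbf a_\circ)=(\boldsymbol\xi(t_\circ),\boldsymbol\zeta(t_\circ),\dot{\boldsymbol\zeta}(t_\circ))$ for each vehicle, $\mathbf v_*=\mathbf v_\circ/\|\mathbf v_\circ\|_2=(v_{*x},v_{*y})$, $\mathbf v_\perp=(-v_{*y},v_{*x})$, longitudinal acceleration $a_f=\mathbf a_\circ\cdot\mathbf v_*$ and lateral acceleration $a_s=\mathbf a_\circ\cdot\mathbf v_\perp$. Straight-line model (used when $a_s$ is zero or negligible): $\mathbf p(t)=\mathbf p_\circ+\mathbf v_\circ(t-t_\circ)+\tfrac12\mathbf a_\circ(t-t_\circ)^2$, $\mathbf v(t)=\mathbf v_\circ+\mathbf a_\circ(t-t_\circ)$, $\mathbf a(t)\equiv\mathbf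 a_\circ$. Circular model (used when $a_s\neq0$): $r=\|\mathbf v_\circ\|_2^2/|a_s|$, $\omega_0=a_s/\|\mathbf v_\circ\|_2$, center $\mathbf c=\mathbf p_\circ+r\,\mathrm{sgn}(a_s)\mathbf v_\perp$, initial phase $\alpha_0=\mathrm{sgn}(p_{\circ,y}-c_y)\arccos\big((p_{\circ,x}-c_x)/r\big)$, where $\mathrm{sgn}(z)=1$ if $z\ge0$ and $-1$ otherwise; $\omega(t)=\min\{0,\omega_0+\tfrac{a_f}{2r}(t-t_\circ)\}$ if $\omega_0<0$ and $\omega(t)=\max\{0,\omega_0+\tfrac{a_f}{2r}(t-t_\circ)\}$ if $\omega_0>0$; and $\mathbf p(t)=\mathbf c+r\big(\cos(\alpha_0+\omega(t)(t-t_\circ)),\ \sin(\alpha_0+\omega(t)(t-t_\circ))\big)$ for $t\ge t_\circ$. *)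

theory Defs
  imports "HOL-Analysis.Analysis"
begin

text \<open>Points of the plane are pairs of reals; the norm on real \<times> real is the Euclidean norm.\<close>

definition sgnp :: "real \<Rightarrow> real" where
  "sgnp z = (if z \<ge> 0 then 1 else -1)"

definition vstar :: "real \<times> real \<Rightarrow> real \<times> real" where
  "vstar v = (1 / norm v) *\<^sub>R v"

definition vperp :: "real \<times> real \<Rightarrow> real \<times> real" where
  "vperp v = (- snd (vstar v), fst (vstar v))"

definition long_acc :: "real \<times> real \<Rightarrow> real \<times> real \<Rightarrow> real" where
  "long_acc v a = a \<bullet> vstar v"

definition lat_acc :: "real \<times> real \<Rightarrow> real \<times> real \<Rightarrow> real" where
  "lat_acc v a = a \<bullet> vperp v"

definition straight_pos ::
  "real \<Rightarrow> real \<times> real \<Rightarrow> real \<times> real \<Rightarrow> real \<times> real \<Rightarrow> real \<Rightarrow> real \<times> real" where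
  "straight_pos t0 p0 v0 a0 t = p0 + (t - t0) *\<^sub>R v0 + ((t - t0)\<^sup>2 / 2) *\<^sub>R a0"

definition circ_radius :: "real \<times> real \<Rightarrow> real \<times> real \<Rightarrow> real" where
  "circ_radius v0 a0 = (norm v0)\<^sup>2 / \<bar>lat_acc v0 a0\<bar>"

definition circ_omega0 :: "real \<times> real \<Rightarrow> real \<times> real \<Rightarrow> real" where
  "circ_omega0 v0 a0 = lat_acc v0 a0 / norm v0"

definition circ_center :: "real \<times> real \<Rightarrow> real \<times> real \<Rightarrow> real \<times> real \<Rightarrow> real \<times> real" where
  "circ_center p0 v0 a0 = p0 + (circ_radius v0 a0 * sgnp (lat_acc v0 a0)) *\<^sub>R vperp v0"

definition circ_alpha0 :: "real \<times> real \<Rightarrow> real \<times> real \<Rightarrow> real \<times> real \<Rightarrow> real" where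
  "circ_alpha0 p0 v0 a0 =
     (let c = circ_center p0 v0 a0 in
      sgnp (snd p0 - snd c) * arccos ((fst p0 - fst c) / circ_radius v0 a0))"

definition circ_omega :: "real \<Rightarrow> real \<times> real \<Rightarrow> real \<times> real \<Rightarrow> real \<Rightarrow> real" where
  "circ_omega t0 v0 a0 t =
     (let w = circ_omega0 v0 a0 + long_acc v0 a0 / (2 * circ_radius v0 a0) * (t - t0) in
      if circ_omega0 v0 a0 < 0 then min 0 w else max 0 w)"

definition circ_pos ::
  "real \<Rightarrow> real \<times> real \<Rightarrow> real \<times> real \<Rightarrow> real \<times> real \<Rightarrow> real \<Rightarrow> real \<times> real" where
  "circ_pos t0 p0 v0 a0 t =
     (let \<theta> = circ_alpha0 p0 v0 a0 + circ_omega t0 v0 a0 t * (t - t0) in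
      circ_center p0 v0 a0 + circ_radius v0 a0 *\<^sub>R (cos \<theta>, sin \<theta>))"

definition model_traj ::
  "real \<Rightarrow> real \<times> real \<Rightarrow> real \<times> real \<Rightarrow> real \<times> real \<Rightarrow> (real \<Rightarrow> real \<times> real) \<Rightarrow> bool" where
  "model_traj t0 p0 v0 a0 P \<longleftrightarrow>
     (\<forall>t\<ge>t0. P t = straight_pos t0 p0 v0 a0 t) \<or>
     (v0 \<noteq> 0 \<and> lat_acc v0 a0 \<noteq> 0 \<and> (\<forall>t\<ge>t0. P t = circ_pos t0 p0 v0 a0 t))"

end

theory Submission
  imports Defs "HOL-Complex_Analysis.Complex_Analysis"
begin

(* Left of the first contact time T_S each model trajectory agrees with the restriction of entire
   functions to the reals: the straight line is polynomial in t, and near T_S the clipped angular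
   rate of the circular model is either its affine formula or 0, so the angle is polynomial.
   Hence g = d_ij^2 - phi^2 is real analytic on some [a, T_S], positive on [a, T_S) and
   nonpositive at T_S.  Then g is not constant, so the zeros of its (entire) derivative cannot
   accumulate at T_S; on some [c, T_S) the derivative therefore keeps one sign, and that sign is
   negative because g drops to a nonpositive value at T_S. *)

definition real_entire_on :: "real set \<Rightarrow> (real \<Rightarrow> real) \<Rightarrow> bool" where
  "real_entire_on S f \<longleftrightarrow>
     (\<exists>G. G holomorphic_on UNIV \<and> (\<forall>t\<in>S. G (of_real t) = of_real (f t)))"

named_theorems real_entire_intros

lemma real_entire_on_cong:
  "real_entire_on S f \<Longrightarrow> (\<And>t. t \<in> S \<Longrightarrow> g t = f t) \<Longrightarrow> real_entire_on S g"
  unfolding real_entire_on_def by metis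

lemma real_entire_on_subset:
  "real_entire_on S f \<Longrightarrow> T \<subseteq> S \<Longrightarrow> real_entire_on T f"
  unfolding real_entire_on_def by blast

lemma real_entire_on_const [real_entire_intros]: "real_entire_on S (\<lambda>t. c)"
  unfolding real_entire_on_def by (intro exI[of _ "\<lambda>z. of_real c"]) auto

lemma real_entire_on_ident [real_entire_intros]: "real_entire_on S (\<lambda>t. t)"
  unfolding real_entire_on_def by (intro exI[of _ "\<lambda>z. z"]) auto

lemma real_entire_on_compose:
  assumes "real_entire_on S f" "E holomorphic_on UNIV" "\<And>x. E (of_real x) = of_real (e x)"
  shows "real_entire_on S (\<lambda>t. e (f t))"
proof -
  obtain F where "F holomorphic_on UNIV" "\<forall>t\<in>S. F (of_real t) = of_real (f t)"
    using assms(1) unfolding real_entire_on_def by blast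
  with assms(2,3) show ?thesis
    unfolding real_entire_on_def
    by (intro exI[of _ "\<lambda>z. E (F z)"]) (auto intro: holomorphic_on_compose_gen[unfolded o_def])
qed

lemma real_entire_on_binop:
  assumes "real_entire_on S f" "real_entire_on S g"
    and "\<And>F G. F holomorphic_on UNIV \<Longrightarrow> G holomorphic_on UNIV \<Longrightarrow>
           (\<lambda>z. H (F z) (G z)) holomorphic_on UNIV"
    and "\<And>x y. H (of_real x) (of_real y) = of_real (h x y)"
  shows "real_entire_on S (\<lambda>t. h (f t) (g t))"
proof -
  obtain F G where "F holomorphic_on UNIV" "\<forall>t\<in>S. F (of_real t) = of_real (f t)"
    and "G holomorphic_on UNIV" "\<forall>t\<in>S. G (of_real t) = of_real (g t)"
    using assms(1,2) unfolding real_entire_on_def by blast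
  with assms(3,4) show ?thesis
    unfolding real_entire_on_def by (intro exI[of _ "\<lambda>z. H (F z) (G z)"]) auto
qed

lemma real_entire_on_add [real_entire_intros]:
  "real_entire_on S f \<Longrightarrow> real_entire_on S g \<Longrightarrow> real_entire_on S (\<lambda>t. f t + g t)"
  by (rule real_entire_on_binop[where H = "(+)"]) (auto intro: holomorphic_intros)

lemma real_entire_on_diff [real_entire_intros]:
  "real_entire_on S f \<Longrightarrow> real_entire_on S g \<Longrightarrow> real_entire_on S (\<lambda>t. f t - g t)"
  by (rule real_entire_on_binop[where H = "(-)"]) (auto intro: holomorphic_intros)

lemma real_entire_on_mult [real_entire_intros]:
  "real_entire_on S f \<Longrightarrow> real_entire_on S g \<Longrightarrow> real_entire_on S (\<lambda>t. f t * g t)"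
  by (rule real_entire_on_binop[where H = "(*)"]) (auto intro: holomorphic_intros)

lemma real_entire_on_power [real_entire_intros]:
  "real_entire_on S f \<Longrightarrow> real_entire_on S (\<lambda>t. f t ^ n)"
  by (rule real_entire_on_compose[where E = "\<lambda>z. z ^ n"]) (auto intro: holomorphic_intros)

lemma real_entire_on_divide_const [real_entire_intros]:
  "real_entire_on S f \<Longrightarrow> real_entire_on S (\<lambda>t. f t / c)"
  by (rule real_entire_on_compose[where E = "\<lambda>z. z / of_real c"]) (auto intro: holomorphic_intros)

lemma real_entire_on_cos [real_entire_intros]:
  "real_entire_on S f \<Longrightarrow> real_entire_on S (\<lambda>t. cos (f t))"
  by (rule real_entire_on_compose[where E = cos]) (auto intro: holomorphic_intros simp: cos_of_real)

lemma real_entire_on_sin [real_entire_intros]: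
  "real_entire_on S f \<Longrightarrow> real_entire_on S (\<lambda>t. sin (f t))"
  by (rule real_entire_on_compose[where E = sin]) (auto intro: holomorphic_intros simp: sin_of_real)

lemma real_entire_deriv:
  assumes G: "G holomorphic_on UNIV" and eq: "\<forall>t\<in>S. G (of_real t) = of_real (g t)"
    and t: "t \<in> interior S"
  shows "(g has_real_derivative Re (deriv G (of_real t))) (at t)"
    and "Im (deriv G (of_real t)) = 0"
proof -
  have dG: "((\<lambda>x. G (of_real x)) has_vector_derivative deriv G (of_real t)) (at t)"
    using G by (intro has_vector_derivative_real_field holomorphic_derivI[of G UNIV]) auto
  have eq_int: "\<And>x. x \<in> interior S \<Longrightarrow> G (of_real x) = of_real (g x)"
    using eq interior_subset by blast
  have "((\<lambda>x. Re (G (of_real x))) has_real_derivative Re (deriv G (of_real t))) (at t)"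
    using bounded_linear.has_vector_derivative[OF bounded_linear_Re dG]
    by (simp add: has_real_derivative_iff_has_vector_derivative)
  then show "(g has_real_derivative Re (deriv G (of_real t))) (at t)"
    by (rule has_field_derivative_transform_within_open[OF _ open_interior t]) (simp add: eq_int)
  have "((\<lambda>x. Im (G (of_real x))) has_real_derivative Im (deriv G (of_real t))) (at t)"
    using bounded_linear.has_vector_derivative[OF bounded_linear_Im dG]
    by (simp add: has_real_derivative_iff_has_vector_derivative)
  moreover have "((\<lambda>x. Im (G (of_real x))) has_real_derivative 0) (at t)"
    by (rule has_field_derivative_transform_within_open[OF DERIV_const open_interior t])
      (simp add: eq_int)
  ultimately show "Im (deriv G (of_real t)) = 0"
    by (rule DERIV_unique)
qed

lemma deriv_nonzero_imp_strictly_decreasing: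
  fixes g g' :: "real \<Rightarrow> real"
  assumes "c < T" and cont: "continuous_on {c..T} g"
    and deriv: "\<And>t. t \<in> {c<..<T} \<Longrightarrow> (g has_real_derivative g' t) (at t)"
    and cont': "continuous_on {c<..<T} g'"
    and nonzero: "\<And>t. t \<in> {c<..<T} \<Longrightarrow> g' t \<noteq> 0"
    and drop: "g T < g c"
    and st: "c \<le> s" "s < t" "t \<le> T"
  shows "g t < g s"
proof -
  have neg: "g' x < 0" if x: "x \<in> {c<..<T}" for x
  proof (rule ccontr)
    assume "\<not> g' x < 0"
    with nonzero x have "g' x > 0" by force
    obtain l u where u: "c < u" "u < T" "(g has_real_derivative l) (at u)" "g T - g c = (T - c) * l"
      using MVT[OF \<open>c < T\<close> cont] deriv by (force simp: real_differentiable_def)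
    then have "(T - c) * l < 0"
      using drop by linarith
    with \<open>c < T\<close> have "l < 0"
      by (simp add: mult_less_0_iff)
    moreover have "g' u = l"
      using DERIV_unique[OF deriv u(3)] u(1,2) by simp
    ultimately have "g' u < 0"
      by simp
    have "connected (g' ` {c<..<T})"
      by (rule connected_continuous_image[OF cont' connected_Ioo])
    moreover have "g' u \<in> g' ` {c<..<T}" "g' x \<in> g' ` {c<..<T}"
      using u x by auto
    ultimately have "0 \<in> g' ` {c<..<T}"
      using \<open>g' u < 0\<close> \<open>g' x > 0\<close> by (auto intro: connectedD_interval[of _ "g' u" "g' x"])
    with nonzero show False by force
  qed
  show ?thesis
  proof (rule DERIV_neg_imp_decreasing_open[OF \<open>s < t\<close>])
    show "\<exists>y. (g has_real_derivative y) (at x) \<and> y < 0" if "s < x" "x < t" for x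
    proof -
      have "x \<in> {c<..<T}" using that st by auto
      with deriv neg show ?thesis by blast
    qed
    show "continuous_on {s..t} g"
      using cont st by (auto intro: continuous_on_subset)
  qed
qed

lemma nonconstant_entire_deriv_nonzero_near:
  fixes G :: "complex \<Rightarrow> complex"
  assumes G: "G holomorphic_on UNIV" and "G u \<noteq> G v"
  obtains d where "d > 0" "\<And>w. w \<noteq> z \<Longrightarrow> dist w z < d \<Longrightarrow> deriv G w \<noteq> 0"
proof -
  have "\<exists>\<beta>. deriv G \<beta> \<noteq> 0"
  proof (rule ccontr)
    assume "\<nexists>\<beta>. deriv G \<beta> \<noteq> 0"
    then have "(G has_field_derivative 0) (at w)" for w
      using holomorphic_derivI[OF G open_UNIV UNIV_I, of w] by simp
    then have "\<exists>k. \<forall>w\<in>UNIV. G w = k"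
      by (intro has_field_derivative_zero_constant) auto
    with \<open>G u \<noteq> G v\<close> show False
      by auto
  qed
  then obtain \<beta> where "deriv G \<beta> \<noteq> 0"
    by blast
  then have "\<forall>\<^sub>F w in at z. deriv G w \<noteq> 0 \<and> w \<in> UNIV"
    by (rule non_zero_neighbour_alt[OF holomorphic_deriv[OF G open_UNIV] open_UNIV connected_UNIV
          UNIV_I UNIV_I])
  then obtain d where "d > 0" "\<forall>w\<in>UNIV. w \<noteq> z \<and> dist w z < d \<longrightarrow> deriv G w \<noteq> 0 \<and> w \<in> UNIV"
    unfolding eventually_at by blast
  then show ?thesis
    using that by blast
qed

lemma real_entire_on_strictly_decreasing_before_zero:
  fixes g :: "real \<Rightarrow> real"
  assumes g: "real_entire_on {a..T} g" and "a < T"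
    and pos: "\<And>t. t \<in> {a..<T} \<Longrightarrow> g t > 0" and "g T \<le> 0"
  obtains c where "a \<le> c" "c < T" "\<And>s t. c \<le> s \<Longrightarrow> s < t \<Longrightarrow> t \<le> T \<Longrightarrow> g t < g s"
proof -
  obtain G where G: "G holomorphic_on UNIV" and eq: "\<forall>t\<in>{a..T}. G (of_real t) = of_real (g t)"
    using g unfolding real_entire_on_def by blast
  define g' where "g' t = Re (deriv G (of_real t))" for t
  have deriv_g: "(g has_real_derivative g' t) (at t)"
    and deriv_G: "deriv G (of_real t) = of_real (g' t)" if "t \<in> {a<..<T}" for t
    using real_entire_deriv[OF G eq] that by (simp_all add: g'_def complex_eq_iff)
  have "g a \<noteq> g T"
    using pos[of a] \<open>g T \<le> 0\<close> \<open>a < T\<close> by simp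
  then have "G (of_real a) \<noteq> G (of_real T)"
    using eq \<open>a < T\<close> by simp
  then obtain d where "d > 0"
    and d: "\<And>w. w \<noteq> of_real T \<Longrightarrow> dist w (of_real T) < d \<Longrightarrow> deriv G w \<noteq> 0"
    using nonconstant_entire_deriv_nonzero_near[OF G] by blast
  have cont_g: "continuous_on {a..T} g"
  proof (rule continuous_on_eq)
    show "continuous_on {a..T} (\<lambda>t. Re (G (of_real t)))"
      by (intro continuous_intros continuous_on_compose2[OF holomorphic_on_imp_continuous_on[OF G]])
        auto
    show "Re (G (of_real t)) = g t" if "t \<in> {a..T}" for t
      using eq that by simp
  qed
  have cont_g': "continuous_on UNIV g'"
    unfolding g'_def
    by (intro continuous_intros continuous_on_compose2[OF holomorphic_on_imp_continuous_on,
          OF holomorphic_deriv[OF G open_UNIV]])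
      auto
  define c where "c = max a (T - d)"
  have "a \<le> c" "c < T"
    unfolding c_def using \<open>d > 0\<close> \<open>a < T\<close> by simp_all
  moreover have "g t < g s" if st: "c \<le> s" "s < t" "t \<le> T" for s t
  proof (rule deriv_nonzero_imp_strictly_decreasing[OF \<open>c < T\<close> _ _ _ _ _ st])
    show "continuous_on {c..T} g"
      using cont_g by (rule continuous_on_subset) (simp add: \<open>a \<le> c\<close>)
    show "continuous_on {c<..<T} g'"
      using cont_g' by (rule continuous_on_subset) simp
    show "(g has_real_derivative g' x) (at x)" if "x \<in> {c<..<T}" for x
      using deriv_g \<open>a \<le> c\<close> that by simp
    show "g' x \<noteq> 0" if x: "x \<in> {c<..<T}" for x
    proof
      assume "g' x = 0"
      then have "deriv G (of_real x) = 0"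
        using deriv_G \<open>a \<le> c\<close> x by simp
      moreover have "dist (of_real x) (of_real T :: complex) < d"
        using x unfolding c_def by (simp add: dist_norm flip: of_real_diff)
      ultimately show False
        using d[of "of_real x"] x by simp
    qed
    show "g T < g c"
      using pos[of c] \<open>g T \<le> 0\<close> \<open>a \<le> c\<close> \<open>c < T\<close> by simp
  qed
  ultimately show ?thesis
    using that by blast
qed

lemma affine_sign_stable_left:
  fixes w k t0 T :: real
  assumes "t0 < T"
  obtains a where "t0 \<le> a" "a < T"
    "(\<forall>t\<in>{a..T}. w + k * (t - t0) \<le> 0) \<or> (\<forall>t\<in>{a..T}. 0 \<le> w + k * (t - t0))"
proof (cases "k = 0")
  case True
  then show ?thesis
    using that[of t0] assms by force
next
  case False
  define r where "r = t0 - w / k"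
  have root: "w + k * (t - t0) = k * (t - r)" for t
    using False by (simp add: r_def field_simps)
  define a where "a = (if r < T then max t0 r else t0)"
  have "(\<forall>t\<in>{a..T}. 0 \<le> t - r) \<or> (\<forall>t\<in>{a..T}. t - r \<le> 0)"
    by (auto simp: a_def)
  then have "(\<forall>t\<in>{a..T}. k * (t - r) \<le> 0) \<or> (\<forall>t\<in>{a..T}. 0 \<le> k * (t - r))"
    by (cases "k > 0") (auto simp: mult_le_0_iff zero_le_mult_iff)
  moreover have "t0 \<le> a" "a < T"
    using assms by (auto simp: a_def)
  ultimately show ?thesis
    using that by (simp add: root)
qed

lemma real_entire_on_circ_omega:
  assumes "t0 < T"
  obtains a where "t0 \<le> a" "a < T" "real_entire_on {a..T} (circ_omega t0 v0 a0)"
proof -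
  define w where "w = circ_omega0 v0 a0"
  define k where "k = long_acc v0 a0 / (2 * circ_radius v0 a0)"
  obtain a where a: "t0 \<le> a" "a < T"
    and sign: "(\<forall>t\<in>{a..T}. w + k * (t - t0) \<le> 0) \<or> (\<forall>t\<in>{a..T}. 0 \<le> w + k * (t - t0))"
    using affine_sign_stable_left[OF assms] by blast
  have omega: "circ_omega t0 v0 a0 t =
      (if w < 0 then min 0 (w + k * (t - t0)) else max 0 (w + k * (t - t0)))" for t
    by (simp add: circ_omega_def w_def k_def)
  have "real_entire_on {a..T} (circ_omega t0 v0 a0)"
  proof (cases "(w < 0) = (\<forall>t\<in>{a..T}. w + k * (t - t0) \<le> 0)")
    case True
    have "real_entire_on {a..T} (\<lambda>t. w + k * (t - t0))"
      by (intro real_entire_intros)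
    then show ?thesis
      by (rule real_entire_on_cong) (use sign True in \<open>auto simp: omega\<close>)
  next
    case False
    show ?thesis
      by (rule real_entire_on_cong[OF real_entire_on_const[of _ 0]])
        (use sign False in \<open>auto simp: omega\<close>)
  qed
  with a that show ?thesis by blast
qed

lemma model_traj_real_entire:
  assumes traj: "model_traj t0 p0 v0 a0 P" and "t0 < T"
  obtains a where "t0 \<le> a" "a < T"
    "real_entire_on {a..T} (\<lambda>t. fst (P t))" "real_entire_on {a..T} (\<lambda>t. snd (P t))"
  using traj unfolding model_traj_def
proof (elim disjE conjE)
  assume P: "\<forall>t\<ge>t0. P t = straight_pos t0 p0 v0 a0 t"
  have x: "real_entire_on {t0..T} (\<lambda>t. fst p0 + (t - t0) * fst v0 + (t - t0)\<^sup>2 / 2 * fst a0)"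
    and y: "real_entire_on {t0..T} (\<lambda>t. snd p0 + (t - t0) * snd v0 + (t - t0)\<^sup>2 / 2 * snd a0)"
    by (intro real_entire_intros)+
  have "real_entire_on {t0..T} (\<lambda>t. fst (P t))"
    using x by (rule real_entire_on_cong) (simp add: P straight_pos_def)
  moreover have "real_entire_on {t0..T} (\<lambda>t. snd (P t))"
    using y by (rule real_entire_on_cong) (simp add: P straight_pos_def)
  ultimately
  show ?thesis
    using that \<open>t0 < T\<close> by blast
next
  assume P: "\<forall>t\<ge>t0. P t = circ_pos t0 p0 v0 a0 t"
  obtain a where a: "t0 \<le> a" "a < T" and omega: "real_entire_on {a..T} (circ_omega t0 v0 a0)"
    using real_entire_on_circ_omega[OF \<open>t0 < T\<close>] by blast
  define \<theta> where "\<theta> t = circ_alpha0 p0 v0 a0 + circ_omega t0 v0 a0 t * (t - t0)" for t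
  define c where "c = circ_center p0 v0 a0"
  define r where "r = circ_radius v0 a0"
  have x: "real_entire_on {a..T} (\<lambda>t. fst c + r * cos (\<theta> t))"
    and y: "real_entire_on {a..T} (\<lambda>t. snd c + r * sin (\<theta> t))"
    unfolding \<theta>_def by (intro real_entire_intros omega)+
  have P_polar: "P t = (fst c + r * cos (\<theta> t), snd c + r * sin (\<theta> t))" if "t \<in> {a..T}" for t
    using P a that by (simp add: circ_pos_def Let_def \<theta>_def c_def r_def prod_eq_iff)
  have "real_entire_on {a..T} (\<lambda>t. fst (P t))"
    using x by (rule real_entire_on_cong) (simp add: P_polar)
  moreover have "real_entire_on {a..T} (\<lambda>t. snd (P t))"
    using y by (rule real_entire_on_cong) (simp add: P_polar)
  ultimately show ?thesis
    using that a by blast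
qed

lemma continuous_on_model_traj:
  assumes "model_traj t0 p0 v0 a0 P"
  shows "continuous_on {t0..} P"
  using assms unfolding model_traj_def
proof (elim disjE conjE)
  assume P: "\<forall>t\<ge>t0. P t = straight_pos t0 p0 v0 a0 t"
  have "continuous_on {t0..} (straight_pos t0 p0 v0 a0)"
    unfolding straight_pos_def by (intro continuous_intros) simp
  then show ?thesis
    by (rule continuous_on_eq) (use P in auto)
next
  assume P: "\<forall>t\<ge>t0. P t = circ_pos t0 p0 v0 a0 t"
  have "continuous_on S (\<lambda>t. min 0 (w + k * (t - t0)))" "continuous_on S (\<lambda>t. max 0 (w + k * (t - t0)))"
    for S and w k :: real
    by (intro continuous_intros)+
  then have "continuous_on {t0..} (circ_omega t0 v0 a0)"
    unfolding circ_omega_def Let_def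
    by (cases "circ_omega0 v0 a0 < 0") (simp_all only: if_True if_False)
  then have "continuous_on {t0..} (circ_pos t0 p0 v0 a0)"
    unfolding circ_pos_def Let_def by (intro continuous_intros)
  then show ?thesis
    by (rule continuous_on_eq) (use P in auto)
qed

lemma first_hitting_time:
  fixes h :: "real \<Rightarrow> real"
  assumes cont: "continuous_on {t0..} h" and "h t0 > 0"
    and hit: "{t. t \<ge> t0 \<and> h t \<le> 0} \<noteq> {}"
  defines "T \<equiv> Inf {t. t \<ge> t0 \<and> h t \<le> 0}"
  shows "t0 < T" and "h T \<le> 0" and "\<And>t. t0 \<le> t \<Longrightarrow> t < T \<Longrightarrow> h t > 0"
proof -
  define S where "S = {t. t \<ge> t0 \<and> h t \<le> 0}"
  have "closed S"
    using continuous_on_closed_Collect_le[OF cont continuous_on_const closed_atLeast]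
    by (simp add: S_def)
  moreover have bdd: "bdd_below S"
    unfolding S_def by (rule bdd_belowI[of _ t0]) auto
  moreover have "S \<noteq> {}"
    using hit by (simp add: S_def)
  ultimately have "T \<in> S"
    unfolding T_def S_def[symmetric] by (intro closed_contains_Inf)
  then show "h T \<le> 0" and "t0 < T"
    using \<open>h t0 > 0\<close> by (auto simp: S_def order_le_less)
  show "h t > 0" if "t0 \<le> t" "t < T" for t
  proof (rule ccontr)
    assume "\<not> h t > 0"
    with that have "t \<in> S" by (simp add: S_def)
    then have "T \<le> t"
      unfolding T_def S_def[symmetric] using bdd by (rule cInf_lower)
    with that show False by simp
  qed
qed

lemma dist_prod_power2:
  fixes x y :: "real \<times> real"
  shows "(dist x y)\<^sup>2 = (fst x - fst y)\<^sup>2 + (snd x - snd y)\<^sup>2"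
  by (simp add: dist_prod_def dist_real_def)

lemma model_traj_dist_power2_real_entire:
  assumes traj_P: "model_traj t0 p0 v0 a0 P" and traj_Q: "model_traj t0 q0 w0 b0 Q"
    and "t0 < T"
  obtains a where "t0 \<le> a" "a < T" "real_entire_on {a..T} (\<lambda>t. (dist (P t) (Q t))\<^sup>2)"
proof -
  obtain aP aQ where "t0 \<le> aP" "aP < T" "t0 \<le> aQ" "aQ < T"
    and xyP: "real_entire_on {aP..T} (\<lambda>t. fst (P t))" "real_entire_on {aP..T} (\<lambda>t. snd (P t))"
    and xyQ: "real_entire_on {aQ..T} (\<lambda>t. fst (Q t))" "real_entire_on {aQ..T} (\<lambda>t. snd (Q t))"
    using model_traj_real_entire[OF traj_P \<open>t0 < T\<close>] model_traj_real_entire[OF traj_Q \<open>t0 < T\<close>]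
    by metis
  define a where "a = max aP aQ"
  have "{a..T} \<subseteq> {aP..T}" "{a..T} \<subseteq> {aQ..T}"
    by (auto simp: a_def)
  then have "real_entire_on {a..T} (\<lambda>t. (fst (P t) - fst (Q t))\<^sup>2 + (snd (P t) - snd (Q t))\<^sup>2)"
    using xyP xyQ by (intro real_entire_intros) (auto elim: real_entire_on_subset)
  then have "real_entire_on {a..T} (\<lambda>t. (dist (P t) (Q t))\<^sup>2)"
    by (rule real_entire_on_cong) (simp add: dist_prod_power2)
  moreover have "t0 \<le> a" "a < T"
    using \<open>t0 \<le> aP\<close> \<open>aP < T\<close> \<open>aQ < T\<close> by (simp_all add: a_def)
  ultimately show ?thesis
    using that by blast
qed

theorem theorem1:
  fixes t0 \<phi> :: real
    and pi0 vi0 ai0 pj0 vj0 aj0 :: "real \<times> real"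
    and Pi Pj :: "real \<Rightarrow> real \<times> real"
  assumes phi_pos: "\<phi> > 0"
    and traj_i: "model_traj t0 pi0 vi0 ai0 Pi"
    and traj_j: "model_traj t0 pj0 vj0 aj0 Pj"
    and no_coll_init: "dist (Pi t0) (Pj t0) > \<phi>"
    and finite_TS: "{t. t \<ge> t0 \<and> dist (Pi t) (Pj t) - \<phi> \<le> 0} \<noteq> {}"
  shows "\<exists>tc. t0 \<le> tc \<and> tc < Inf {t. t \<ge> t0 \<and> dist (Pi t) (Pj t) - \<phi> \<le> 0} \<and>
           (\<forall>s t. tc \<le> s \<and> s < t \<and> t < Inf {t. t \<ge> t0 \<and> dist (Pi t) (Pj t) - \<phi> \<le> 0} \<longrightarrow>
                  dist (Pi t) (Pj t) - \<phi> < dist (Pi s) (Pj s) - \<phi>)"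
proof -
  define d where "d t = dist (Pi t) (Pj t)" for t
  define T where "T = Inf {t. t \<ge> t0 \<and> d t - \<phi> \<le> 0}"
  have "continuous_on {t0..} (\<lambda>t. d t - \<phi>)"
    unfolding d_def
    by (intro continuous_intros continuous_on_model_traj[OF traj_i] continuous_on_model_traj[OF traj_j])
  note hitting = first_hitting_time[OF this _ finite_TS[folded d_def], folded T_def]
  have "t0 < T" "d T \<le> \<phi>" and before: "\<And>t. t0 \<le> t \<Longrightarrow> t < T \<Longrightarrow> d t > \<phi>"
    using hitting no_coll_init by (auto simp: d_def)
  obtain a where "t0 \<le> a" "a < T" and d_sq: "real_entire_on {a..T} (\<lambda>t. (d t)\<^sup>2)"
    using model_traj_dist_power2_real_entire[OF traj_i traj_j \<open>t0 < T\<close>] unfolding d_def by blast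
  have "real_entire_on {a..T} (\<lambda>t. (d t)\<^sup>2 - \<phi>\<^sup>2)"
    by (rule real_entire_on_diff[OF d_sq real_entire_on_const])
  moreover have "(d t)\<^sup>2 - \<phi>\<^sup>2 > 0" if "t \<in> {a..<T}" for t
    using before[of t] that phi_pos \<open>t0 \<le> a\<close> by (simp add: power_strict_mono)
  moreover have "(d T)\<^sup>2 - \<phi>\<^sup>2 \<le> 0"
    using \<open>d T \<le> \<phi>\<close> by (simp add: d_def power_mono)
  ultimately obtain c where "a \<le> c" "c < T"
    and decreasing: "\<And>s t. c \<le> s \<Longrightarrow> s < t \<Longrightarrow> t \<le> T \<Longrightarrow> (d t)\<^sup>2 - \<phi>\<^sup>2 < (d s)\<^sup>2 - \<phi>\<^sup>2"
    using real_entire_on_strictly_decreasing_before_zero \<open>a < T\<close> by blast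
  have "d t < d s" if "c \<le> s" "s < t" "t < T" for s t
    using decreasing[of s t] that by (simp add: d_def power_less_imp_less_base)
  then show ?thesis
    using \<open>t0 \<le> a\<close> \<open>a \<le> c\<close> \<open>c < T\<close> by (auto simp: T_def d_def intro!: exI[of _ c])
qed

end
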